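(* For every finite group $G\le\mathrm{O}(d)$ and all $z_1,\ldots,z_n\in\mathbb{R}^d$, $\tilde\alpha(\{z_i\}_{i=1}^n,G)\le\alpha(\{z_i\}_{i=1}^n,G)$.
   Context: For $x\in\mathbb{R}^d$, $[x]:=\{gx:g\in G\}$. The open Voronoi cell $V_x$ is the set of $y$ such that $x$ is the unique maximizer of $\langle p,y\rangle$ over $p\in[x]$; $Q_x:=\bigcup_{p\in[x]}V_p$. $P(G):=\{x:\mathrm{stab}_G(x)=\{\mathrm{id}\}\}$, $\mathcal{O}:=P(G)\cap\bigcap_{i=1}^nQ_{z_i}$. For $x\in\mathcal{O}$, $v_i(x)$ is the unique element of $\arg\max_{p\in[z_i]}\langle p,x\rangle$. $S(x,y):=\{q\in[y]:V_q\cap V_x\ne\varnothing\}$, and $\mathcal{F}(x,y)$ is the set of functions $f:\{1,\ldots,n\}\to[y]$ with $f(i)\in S(x,y)\cap\arg\max_{q\in[y]}\langle q,v_i(x)\rangle$ for all $i$. Define $\alpha(\{z_i\},G):=\inf_{x,y\in\mathcal{O}}\max_{f\in\mathcal{F}(x,y)}\big(\sum_{w\in S(x,y)}\lambda_{\min}(\sum_{i\in f^{-1}(w)}v_i(x)v_i(x)^\top)\big)^{1/2}$. The Voronoi characteristic is $\chi(G):=\max_{x,y\in P(G)}|S(x,y)|$, and $\tilde\alpha(\{z_i\},G):=\min_{I\subseteq\{1,\ldots,n\},\,|I|\ge n/\chi(G)}\ \min_{(g_i)_{i\in I}\in G^I}\big(\lambda_{\min}(\sum_{i\in I}(g_iz_i)(g_iz_i)^\top)\big)^{1/2}$.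 *)

theory Defs
  imports "HOL-Analysis.Analysis"
begin

definition orbit :: "(real^'d^'d) set \<Rightarrow> real^'d \<Rightarrow> (real^'d) set" where
  "orbit G x = (\<lambda>g. g *v x) ` G"

definition vcell :: "(real^'d^'d) set \<Rightarrow> real^'d \<Rightarrow> (real^'d) set" where
  "vcell G x = {y. \<forall>p\<in>orbit G x. p \<noteq> x \<longrightarrow> inner p y < inner x y}"

definition qcell :: "(real^'d^'d) set \<Rightarrow> real^'d \<Rightarrow> (real^'d) set" where
  "qcell G x = (\<Union>p\<in>orbit G x. vcell G p)"

definition principal :: "(real^'d^'d) set \<Rightarrow> (real^'d) set" where
  "principal G = {x. \<forall>g\<in>G. g *v x = x \<longrightarrow> g = mat 1}"

definition goodset :: "(real^'d^'d) set \<Rightarrow> nat \<Rightarrow> (nat \<Rightarrow> real^'d) \<Rightarrow> (real^'d) set" where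
  "goodset G n z = principal G \<inter> (\<Inter>i\<in>{1..n}. qcell G (z i))"

definition vsel :: "(real^'d^'d) set \<Rightarrow> (nat \<Rightarrow> real^'d) \<Rightarrow> nat \<Rightarrow> real^'d \<Rightarrow> real^'d" where
  "vsel G z i x = (THE p. p \<in> orbit G (z i) \<and> (\<forall>q\<in>orbit G (z i). inner q x \<le> inner p x))"

definition Sset :: "(real^'d^'d) set \<Rightarrow> real^'d \<Rightarrow> real^'d \<Rightarrow> (real^'d) set" where
  "Sset G x y = {q \<in> orbit G y. vcell G q \<inter> vcell G x \<noteq> {}}"

definition Ffuns :: "(real^'d^'d) set \<Rightarrow> nat \<Rightarrow> (nat \<Rightarrow> real^'d) \<Rightarrow> real^'d \<Rightarrow> real^'d
    \<Rightarrow> (nat \<Rightarrow> real^'d) set" where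
  "Ffuns G n z x y = {f \<in> {1..n} \<rightarrow>\<^sub>E orbit G y.
     \<forall>i\<in>{1..n}. f i \<in> Sset G x y \<and>
       (\<forall>q\<in>orbit G y. inner q (vsel G z i x) \<le> inner (f i) (vsel G z i x))}"

definition lambda_min :: "real^'d^'d \<Rightarrow> real" where
  "lambda_min A = Min {l. \<exists>v. v \<noteq> 0 \<and> A *v v = l *\<^sub>R v}"

definition outer :: "real^'d \<Rightarrow> real^'d^'d" where
  "outer u = (\<chi> i j. u $ i * u $ j)"

definition alpha :: "(real^'d^'d) set \<Rightarrow> nat \<Rightarrow> (nat \<Rightarrow> real^'d) \<Rightarrow> real" where
  "alpha G n z = (INF xy \<in> goodset G n z \<times> goodset G n z.
     Max ((\<lambda>f. sqrt (\<Sum>w\<in>Sset G (fst xy) (snd xy).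
              lambda_min (\<Sum>i\<in>{i\<in>{1..n}. f i = w}. outer (vsel G z i (fst xy)))))
          ` Ffuns G n z (fst xy) (snd xy)))"

definition voronoi_char :: "(real^'d^'d) set \<Rightarrow> nat" where
  "voronoi_char G = Max {card (Sset G x y) | x y. x \<in> principal G \<and> y \<in> principal G}"

definition alpha_tilde :: "(real^'d^'d) set \<Rightarrow> nat \<Rightarrow> (nat \<Rightarrow> real^'d) \<Rightarrow> real" where
  "alpha_tilde G n z = Min {sqrt (lambda_min (\<Sum>i\<in>I. outer (g i *v z i))) | I g.
      I \<subseteq> {1..n} \<and> real (card I) \<ge> real n / real (voronoi_char G) \<and> g \<in> I \<rightarrow>\<^sub>E G}"

end

theory Submission
  imports Defs
begin

(* Fix x, y in O and an admissible f (O is nonempty because generic points lie in it, and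
   admissible f exist by a perturbation argument on Voronoi cells). The fibres of f partition
   {1..n} into at most |S(x,y)| <= chi(G) classes, so some fibre J has at least n/chi(G)
   elements. On J we have v_i(x) = g_i z_i, so lambda_min over J is one of the candidates in
   the minimum defining alpha-tilde, while the remaining summands are nonnegative because sums
   of outer products are positive semidefinite. *)

section \<open>Smallest eigenvalue of a symmetric matrix\<close>

lemma transpose_diff: "transpose (A - B :: 'a::ab_group_add^'n^'m) = transpose A - transpose B"
  by (simp add: transpose_def vec_eq_iff)

lemma inner_matrix_vector_symmetric:
  fixes A :: "real^'n^'n"
  assumes "transpose A = A"
  shows "inner w (A *v v) = inner v (A *v w)"
  by (metis assms dot_lmul_matrix inner_commute transpose_matrix_vector)

lemma finite_eigenvalues_symmetric:
  fixes A :: "real^'n^'n"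
  assumes "transpose A = A"
  shows "finite {l. \<exists>v. v \<noteq> 0 \<and> A *v v = l *\<^sub>R v}"
proof -
  define L where "L = {l. \<exists>v. v \<noteq> 0 \<and> A *v v = l *\<^sub>R v}"
  define e where "e l = (SOME v. v \<noteq> 0 \<and> A *v v = l *\<^sub>R v)" for l
  have e: "e l \<noteq> 0" "A *v e l = l *\<^sub>R e l" if "l \<in> L" for l
    using someI_ex[of "\<lambda>v. v \<noteq> 0 \<and> A *v v = l *\<^sub>R v"] that by (auto simp: L_def e_def)
  have "inj_on e L"
    by (rule inj_onI) (metis e scaleR_cancel_right)
  moreover have "pairwise orthogonal (e ` L)"
  proof (clarsimp simp: pairwise_def)
    fix l l' assume ll: "l \<in> L" "l' \<in> L" "e l \<noteq> e l'"
    have "l * inner (e l') (e l) = l' * inner (e l) (e l')"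
      using inner_matrix_vector_symmetric[OF assms, of "e l'" "e l"] e ll by simp
    then have "(l - l') * inner (e l) (e l') = 0"
      by (simp add: inner_commute algebra_simps)
    with ll show "orthogonal (e l) (e l')" by (auto simp: orthogonal_def)
  qed
  moreover have "0 \<notin> e ` L"
    using e by auto
  ultimately have "finite (e ` L)"
    using pairwise_orthogonal_independent independent_bound by blast
  with \<open>inj_on e L\<close> show ?thesis
    using finite_image_iff L_def by blast
qed

lemma nonneg_quadratic_imp_linear_coeff_zero:
  fixes a c :: real
  assumes "\<And>t. 0 \<le> a * t + c * t\<^sup>2"
  shows "a = 0"
proof (rule ccontr)
  assume "a \<noteq> 0"
  define k where "k = \<bar>c\<bar> + 1"
  have "k > 0" "c < k"
    by (auto simp: k_def)
  have "a * (- a / k) + c * (- a / k)\<^sup>2 = a\<^sup>2 * (c - k) / k\<^sup>2"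
    using \<open>k > 0\<close> by (simp add: field_simps power2_eq_square)
  also have "\<dots> < 0"
    using \<open>a \<noteq> 0\<close> \<open>k > 0\<close> \<open>c < k\<close> by (intro divide_neg_pos mult_pos_neg) auto
  finally show False using assms[of "- a / k"] by simp
qed

lemma symmetric_psd_form_eq_0_imp_kernel:
  fixes B :: "real^'n^'n"
  assumes "transpose B = B" "\<And>u. 0 \<le> inner u (B *v u)" "inner v (B *v v) = 0"
  shows "B *v v = 0"
proof -
  let ?b = "B *v v"
  have "0 \<le> (2 * inner ?b ?b) * t + inner ?b (B *v ?b) * t\<^sup>2" for t
  proof -
    have "0 \<le> inner (v + t *\<^sub>R ?b) (B *v (v + t *\<^sub>R ?b))" by (rule assms(2))
    also have "\<dots> = (2 * inner ?b ?b) * t + inner ?b (B *v ?b) * t\<^sup>2"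
      using assms(3) inner_matrix_vector_symmetric[OF assms(1), of v ?b]
      by (simp add: matrix_vector_right_distrib matrix_vector_mult_scaleR inner_add_left
          inner_add_right inner_commute[of v] power2_eq_square algebra_simps)
    finally show ?thesis .
  qed
  then show ?thesis
    using nonneg_quadratic_imp_linear_coeff_zero by fastforce
qed

lemma rayleigh_minimum:
  fixes A :: "real^'n^'n"
  shows "\<exists>v. norm v = 1 \<and> (\<forall>u. inner v (A *v v) * inner u u \<le> inner u (A *v u))"
proof -
  let ?q = "\<lambda>v. inner v (A *v v)"
  have "continuous_on (sphere 0 1) ?q"
    by (intro continuous_intros)
  moreover have "sphere (0::real^'n) 1 \<noteq> {}"
    by simp
  ultimately obtain v where v: "v \<in> sphere 0 1" and min: "\<And>u. u \<in> sphere 0 1 \<Longrightarrow> ?q v \<le> ?q u"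
    using continuous_attains_inf[OF compact_sphere] by blast
  have "?q v * inner u u \<le> ?q u" for u
  proof (cases "u = 0")
    case False
    have "?q v \<le> ?q (u /\<^sub>R norm u)"
      using False by (intro min) simp
    also have "\<dots> = ?q u / inner u u"
      by (simp add: matrix_vector_mult_scaleR divide_inverse power2_norm_eq_inner[symmetric]
          power2_eq_square)
    finally show ?thesis
      using False by (simp add: pos_le_divide_eq)
  qed simp
  with v show ?thesis by auto
qed

lemma exists_eigenvector_symmetric:
  fixes A :: "real^'n^'n"
  assumes "transpose A = A"
  shows "\<exists>l v. v \<noteq> 0 \<and> A *v v = l *\<^sub>R v"
proof -
  obtain v where v: "norm v = 1" and ge: "\<And>u. inner v (A *v v) * inner u u \<le> inner u (A *v u)"
    using rayleigh_minimum[of A] by blast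
  define l where "l = inner v (A *v v)"
  define B where "B = A - l *\<^sub>R mat 1"
  have Bv: "B *v u = A *v u - l *\<^sub>R u" for u
    by (metis B_def matrix_vector_mul_lid matrix_vector_mult_diff_rdistrib scaleR_matrix_vector_assoc)
  have "B *v v = 0"
  proof (rule symmetric_psd_form_eq_0_imp_kernel)
    show "transpose B = B"
      using assms by (simp add: B_def transpose_diff transpose_scalar)
    show "0 \<le> inner u (B *v u)" for u
      using ge[of u] by (simp add: Bv inner_diff_right l_def)
    show "inner v (B *v v) = 0"
      using v by (simp add: Bv inner_diff_right l_def power2_norm_eq_inner[symmetric])
  qed
  moreover have "v \<noteq> 0"
    using v by auto
  ultimately show ?thesis
    by (auto simp: Bv)
qed

lemma lambda_min_nonneg:
  fixes A :: "real^'n^'n"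
  assumes "transpose A = A" "\<And>v. 0 \<le> inner v (A *v v)"
  shows "0 \<le> lambda_min A"
proof -
  let ?L = "{l. \<exists>v. v \<noteq> 0 \<and> A *v v = l *\<^sub>R v}"
  have "lambda_min A \<in> ?L"
    unfolding lambda_min_def
    using finite_eigenvalues_symmetric[OF assms(1)] exists_eigenvector_symmetric[OF assms(1)]
    by (intro Min_in) auto
  then obtain v where v: "v \<noteq> 0" "A *v v = lambda_min A *\<^sub>R v"
    by blast
  with assms(2)[of v] have "0 \<le> lambda_min A * inner v v"
    by simp
  moreover have "0 < inner v v"
    using \<open>v \<noteq> 0\<close> by simp
  ultimately show ?thesis
    by (simp add: zero_le_mult_iff)
qed

lemma lambda_min_zero: "lambda_min (0 :: real^'n^'n) = 0"
proof -
  have "{l. \<exists>v. v \<noteq> 0 \<and> (0 :: real^'n^'n) *v v = l *\<^sub>R v} = {0}"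
    using exists_eigenvector_symmetric[of "0 :: real^'n^'n"] by auto
  then show ?thesis
    by (simp add: lambda_min_def)
qed

lemma outer_mult_vector: "outer u *v v = inner u v *\<^sub>R u"
  by (simp add: vec_eq_iff outer_def matrix_vector_mult_def inner_vec_def sum_distrib_left
      mult_ac)

lemma sum_matrix_vector_mult: "(\<Sum>i\<in>I. A i) *v v = (\<Sum>i\<in>I. A i *v v)"
  by (induction I rule: infinite_finite_induct) (auto simp: matrix_vector_mult_add_rdistrib)

lemma lambda_min_sum_outer_nonneg: "0 \<le> lambda_min (\<Sum>i\<in>I. outer (u i))"
proof (rule lambda_min_nonneg)
  show "transpose (\<Sum>i\<in>I. outer (u i)) = (\<Sum>i\<in>I. outer (u i))"
    by (simp add: transpose_def vec_eq_iff sum_component outer_def mult.commute)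
  show "0 \<le> inner v ((\<Sum>i\<in>I. outer (u i)) *v v)" for v
    by (simp add: sum_matrix_vector_mult outer_mult_vector inner_sum_right sum_nonneg
        inner_commute[of v])
qed

section \<open>Generic points\<close>

lemma exists_point_avoiding_subspaces:
  fixes U :: "'a::euclidean_space set"
  assumes "finite F" "\<forall>S\<in>F. subspace S \<and> S \<noteq> UNIV" "open U" "U \<noteq> {}"
  shows "\<exists>w\<in>U. \<forall>S\<in>F. w \<notin> S"
  using assms
proof (induction F arbitrary: U rule: finite_induct)
  case (insert S F)
  then have S: "subspace S" "S \<noteq> UNIV"
    by auto
  then have "dim S < dim (UNIV :: 'a set)"
    by (metis dim_psubset span_eq_iff subspace_UNIV top.not_eq_extremum)
  then have "closure (UNIV - S) = UNIV"
    using dense_complement_subspace subspace_UNIV by blast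
  then have "U - S \<noteq> {}"
    using insert.prems by (metis Int_Diff inf_top_right open_Int_closure_eq_empty)
  moreover have "open (U - S)"
    using insert.prems S by (simp add: open_Diff closed_subspace)
  ultimately obtain w where "w \<in> U - S" "\<forall>S\<in>F. w \<notin> S"
    using insert by blast
  then show ?case
    by auto
qed auto

lemma exists_generic_point:
  fixes P :: "'a::euclidean_space set"
  assumes "finite F" "\<forall>S\<in>F. subspace S \<and> S \<noteq> UNIV" "finite P" "open U" "U \<noteq> {}"
  shows "\<exists>w\<in>U. (\<forall>S\<in>F. w \<notin> S) \<and> inj_on (\<lambda>q. inner q w) P"
proof -
  define H where "H = (\<lambda>(q1, q2). {w. inner (q1 - q2) w = 0}) ` (P \<times> P - Id)"
  have "finite H"
    using assms(3) by (simp add: H_def)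
  moreover have "subspace S \<and> S \<noteq> UNIV" if "S \<in> H" for S
  proof -
    obtain q1 q2 where "q1 \<noteq> q2" and S: "S = {w. inner (q1 - q2) w = 0}"
      using \<open>S \<in> H\<close> by (auto simp: H_def)
    then have "q1 - q2 \<notin> S"
      by simp
    then show ?thesis
      using S subspace_hyperplane by blast
  qed
  ultimately obtain w where "w \<in> U" "\<forall>S\<in>F \<union> H. w \<notin> S"
    using exists_point_avoiding_subspaces[of "F \<union> H" U] assms by blast
  moreover have "inj_on (\<lambda>q. inner q w) P"
    using \<open>\<forall>S\<in>F \<union> H. w \<notin> S\<close> by (auto simp: inj_on_def H_def inner_diff_left)
  ultimately show ?thesis
    by blast
qed

lemma finite_exists_max:
  fixes f :: "'a \<Rightarrow> 'b::linorder"
  assumes "finite P" "P \<noteq> {}"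
  shows "\<exists>q\<in>P. \<forall>q'\<in>P. f q' \<le> f q"
proof -
  have "Max (f ` P) \<in> f ` P"
    using assms by (intro Max_in) auto
  then obtain q where "q \<in> P" "f q = Max (f ` P)"
    by auto
  then show ?thesis
    using assms(1) by (metis Max_ge finite_imageI imageI)
qed

lemma exists_strict_argmax:
  fixes P :: "'a::real_inner set"
  assumes "finite P" "P \<noteq> {}" "inj_on (\<lambda>q. inner q w) P"
  shows "\<exists>q\<in>P. \<forall>q'\<in>P. q' \<noteq> q \<longrightarrow> inner q' w < inner q w"
proof -
  obtain q where "q \<in> P" "\<forall>q'\<in>P. inner q' w \<le> inner q w"
    using finite_exists_max[OF assms(1,2), of "\<lambda>q. inner q w"] by blast
  then show ?thesis
    using assms(3) by (metis inj_on_contraD order_le_neq_trans)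
qed

lemma open_imp_ray_point:
  fixes p :: "'a::real_normed_vector"
  assumes "open W" "p \<in> W"
  shows "\<exists>t>0. p + t *\<^sub>R x \<in> W"
proof -
  have "((\<lambda>t. p + t *\<^sub>R x) \<longlongrightarrow> p) (at_right 0)"
    by (auto intro!: tendsto_eq_intros)
  then have "\<forall>\<^sub>F t in at_right 0. p + t *\<^sub>R x \<in> W"
    using assms topological_tendstoD by blast
  moreover have "\<forall>\<^sub>F t in at_right (0::real). t > 0"
    by (simp add: eventually_at_right_less)
  ultimately have "\<forall>\<^sub>F t in at_right 0. t > 0 \<and> p + t *\<^sub>R x \<in> W"
    by eventually_elim auto
  then show ?thesis
    using eventually_happens'[OF trivial_limit_at_right_real] by blast
qed

section \<open>Voronoi cells of orbits of a finite orthogonal group\<close>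

lemma fixed_space_proper:
  fixes g :: "real^'n^'n"
  assumes "g \<noteq> mat 1"
  shows "subspace {w. g *v w = w} \<and> {w. g *v w = w} \<noteq> UNIV"
proof
  show "subspace {w. g *v w = w}"
    by (simp add: subspace_def matrix_vector_right_distrib matrix_vector_mult_scaleR)
  show "{w. g *v w = w} \<noteq> UNIV"
    using assms matrix_eq[of g "mat 1"] by auto
qed

lemma norm_orthogonal_matrix_vector:
  fixes g :: "real^'n^'n"
  assumes "orthogonal_matrix g"
  shows "norm (g *v x) = norm x"
  using assms
  by (metis (mono_tags, lifting) dot_lmul_matrix matrix_vector_mul_assoc matrix_vector_mul_lid
      norm_eq orthogonal_matrix_def vector_transpose_matrix)

locale finite_orthogonal_group =
  fixes G :: "(real^'d^'d) set"
  assumes finite_group: "finite G"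
    and orthogonal: "\<forall>g\<in>G. orthogonal_matrix g"
    and identity: "mat 1 \<in> G"
    and closed_mult: "\<forall>g\<in>G. \<forall>h\<in>G. g ** h \<in> G"
    and closed_transpose: "\<forall>g\<in>G. transpose g \<in> G"
begin

lemma finite_orbit: "finite (orbit G y)"
  unfolding orbit_def using finite_group by simp

lemma in_orbit_self: "y \<in> orbit G y"
  unfolding orbit_def using identity by force

lemma card_orbit_le: "card (orbit G y) \<le> card G"
  unfolding orbit_def using finite_group card_image_le by blast

lemma orbit_transpose_mult: "g \<in> G \<Longrightarrow> transpose g *v y \<in> orbit G y"
  unfolding orbit_def using closed_transpose by (intro imageI) blast

lemma orbit_eq:
  assumes "p \<in> orbit G y"
  shows "orbit G p = orbit G y"
proof -
  obtain g where g: "g \<in> G" "p = g *v y"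
    using assms by (auto simp: orbit_def)
  have "transpose g ** g = mat 1"
    using orthogonal g(1) orthogonal_matrix_def by blast
  then have "h *v y = (h ** transpose g) *v p" for h
    using g(2) by (metis matrix_vector_mul_assoc matrix_vector_mul_lid)
  then have "orbit G y \<subseteq> orbit G p"
    using g(1) closed_mult closed_transpose unfolding orbit_def by (metis image_eqI image_subsetI)
  moreover have "orbit G p \<subseteq> orbit G y"
    using g closed_mult by (auto simp: orbit_def matrix_vector_mul_assoc)
  ultimately show ?thesis
    by blast
qed

lemma inner_orbit_lt_self:
  assumes "r \<in> orbit G x" "r \<noteq> x"
  shows "inner r x < inner x x"
proof -
  obtain g where g: "g \<in> G" "r = g *v x"
    using assms(1) by (auto simp: orbit_def)
  then have "norm r = norm x"
    using orthogonal norm_orthogonal_matrix_vector by blast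
  then have "inner r r = inner x x"
    by (simp add: dot_square_norm)
  moreover have "0 < inner (r - x) (r - x)"
    using assms(2) by simp
  ultimately show ?thesis
    by (simp add: inner_diff_left inner_diff_right inner_commute)
qed

lemma open_vcell: "open (vcell G x)"
proof -
  have "vcell G x = (\<Inter>p\<in>orbit G x - {x}. {y. inner p y < inner x y})"
    unfolding vcell_def by auto
  then show ?thesis
    using finite_orbit by (auto intro!: open_INT open_Collect_less continuous_intros)
qed

lemma vcell_iff_strict_max:
  assumes "q \<in> orbit G y"
  shows "w \<in> vcell G q \<longleftrightarrow> (\<forall>q'\<in>orbit G y. q' \<noteq> q \<longrightarrow> inner q' w < inner q w)"
  using orbit_eq[OF assms] by (simp add: vcell_def)

lemma exists_vcell_if_inj:
  assumes "inj_on (\<lambda>q. inner q w) (orbit G y)"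
  shows "\<exists>q\<in>orbit G y. w \<in> vcell G q"
  using exists_strict_argmax[OF finite_orbit _ assms] in_orbit_self vcell_iff_strict_max by blast

lemma vsel_eq:
  assumes "p \<in> orbit G (z i)" "x \<in> vcell G p"
  shows "vsel G z i x = p"
  unfolding vsel_def
proof (rule the_equality)
  have strict: "\<forall>q\<in>orbit G (z i). q \<noteq> p \<longrightarrow> inner q x < inner p x"
    using assms vcell_iff_strict_max by blast
  then show "p \<in> orbit G (z i) \<and> (\<forall>q\<in>orbit G (z i). inner q x \<le> inner p x)"
    using assms(1) by (metis order_le_less)
  show "p' = p" if "p' \<in> orbit G (z i) \<and> (\<forall>q\<in>orbit G (z i). inner q x \<le> inner p' x)" for p'
    using that strict assms(1) by (meson not_le)
qed

lemma vsel_qcell: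
  assumes "x \<in> qcell G (z i)"
  shows "vsel G z i x \<in> orbit G (z i)" "\<forall>q\<in>orbit G (z i). inner q x \<le> inner (vsel G z i x) x"
proof -
  obtain p where p: "p \<in> orbit G (z i)" "x \<in> vcell G p"
    using assms by (auto simp: qcell_def)
  then show "vsel G z i x \<in> orbit G (z i)"
    using vsel_eq by simp
  show "\<forall>q\<in>orbit G (z i). inner q x \<le> inner (vsel G z i x) x"
    using p vsel_eq vcell_iff_strict_max by (metis order_le_less)
qed

lemma shift_in_vcell:
  assumes max: "\<forall>q\<in>orbit G p. inner q x \<le> inner p x" and "t > 0"
  shows "p + t *\<^sub>R x \<in> vcell G x"
  unfolding vcell_def
proof (intro CollectI ballI impI)
  fix r assume r: "r \<in> orbit G x" "r \<noteq> x"
  then obtain g where g: "g \<in> G" "r = g *v x"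
    by (auto simp: orbit_def)
  have "inner r p = inner x (transpose g *v p)"
    by (simp add: g(2) dot_lmul_matrix[symmetric] inner_commute)
  also have "\<dots> \<le> inner x p"
    using max orbit_transpose_mult[OF g(1), of p] by (metis inner_commute)
  finally have "inner r p \<le> inner x p" .
  moreover have "t * inner r x < t * inner x x"
    using inner_orbit_lt_self[OF r] \<open>t > 0\<close> by simp
  ultimately show "inner r (p + t *\<^sub>R x) < inner x (p + t *\<^sub>R x)"
    by (simp add: inner_add_right inner_commute)
qed

lemma exists_Sset_maximizer:
  assumes max: "\<forall>q\<in>orbit G p. inner q x \<le> inner p x"
  shows "\<exists>q\<in>Sset G x y. \<forall>q'\<in>orbit G y. inner q' p \<le> inner q p"
proof -
  (* Moving p slightly towards x enters V_x while staying in the open set W where a maximizer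
     qs beats every strictly worse competitor; a generic point w there lies in the cell of some
     q of [y], and q cannot be strictly worse than qs at p. *)
  obtain qs where qs: "qs \<in> orbit G y" "\<forall>q'\<in>orbit G y. inner q' p \<le> inner qs p"
    using finite_exists_max[OF finite_orbit, of y "\<lambda>q. inner q p"] in_orbit_self by blast
  define N where "N = {q'\<in>orbit G y. inner q' p < inner qs p}"
  define W where "W = (\<Inter>q'\<in>N. {w. inner q' w < inner qs w})"
  have "open W"
    using finite_orbit unfolding W_def N_def
    by (auto intro!: open_INT open_Collect_less continuous_intros)
  moreover have "p \<in> W"
    by (simp add: W_def N_def)
  ultimately obtain t where "t > 0" "p + t *\<^sub>R x \<in> W"
    using open_imp_ray_point by blast
  then have "p + t *\<^sub>R x \<in> vcell G x \<inter> W"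
    using shift_in_vcell[OF max] by blast
  then obtain w where w: "w \<in> vcell G x \<inter> W" "inj_on (\<lambda>q. inner q w) (orbit G y)"
    using exists_generic_point[of "{}" "orbit G y" "vcell G x \<inter> W"] finite_orbit
      open_vcell \<open>open W\<close> by blast
  then obtain q where q: "q \<in> orbit G y" "w \<in> vcell G q"
    using exists_vcell_if_inj by blast
  then have "q \<in> Sset G x y"
    using w(1) by (auto simp: Sset_def)
  moreover have "inner qs p \<le> inner q p"
  proof (rule ccontr)
    assume "\<not> ?thesis"
    then have "q \<in> N" "q \<noteq> qs"
      using q(1) by (auto simp: N_def)
    then have "inner q w < inner qs w" "inner qs w < inner q w"
      using w(1) q vcell_iff_strict_max qs(1) by (auto simp: W_def)
    then show False
      by simp
  qed
  ultimately show ?thesis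
    using qs(2) order_trans by blast
qed

lemma goodset_nonempty: "goodset G n z \<noteq> {}"
proof -
  define F where "F = (\<lambda>g. {w. g *v w = w}) ` (G - {mat 1})"
  define P where "P = (\<Union>i\<in>{1..n}. orbit G (z i))"
  have "finite F" "\<forall>S\<in>F. subspace S \<and> S \<noteq> UNIV"
    using finite_group fixed_space_proper by (auto simp: F_def)
  moreover have "finite P"
    using finite_orbit by (simp add: P_def)
  ultimately obtain w where w: "\<forall>S\<in>F. w \<notin> S" "inj_on (\<lambda>q. inner q w) P"
    using exists_generic_point[of F P UNIV] by auto
  have "w \<in> principal G"
    using w(1) by (auto simp: principal_def F_def)
  moreover have "w \<in> qcell G (z i)" if "i \<in> {1..n}" for i
  proof -
    have "inj_on (\<lambda>q. inner q w) (orbit G (z i))"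
      using w(2) that by (metis P_def UN_upper inj_on_subset)
    then show ?thesis
      using exists_vcell_if_inj by (auto simp: qcell_def)
  qed
  ultimately show ?thesis
    by (auto simp: goodset_def)
qed

lemma Ffuns_nonempty:
  assumes "x \<in> goodset G n z"
  shows "Ffuns G n z x y \<noteq> {}"
proof -
  have "\<exists>q\<in>Sset G x y. \<forall>q'\<in>orbit G y. inner q' (vsel G z i x) \<le> inner q (vsel G z i x)"
    if "i \<in> {1..n}" for i
  proof (rule exists_Sset_maximizer)
    have "x \<in> qcell G (z i)"
      using assms that by (auto simp: goodset_def)
    then show "\<forall>q\<in>orbit G (vsel G z i x). inner q x \<le> inner (vsel G z i x) x"
      using vsel_qcell orbit_eq by metis
  qed
  then obtain f where f: "\<forall>i\<in>{1..n}. f i \<in> Sset G x y \<and>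
      (\<forall>q'\<in>orbit G y. inner q' (vsel G z i x) \<le> inner (f i) (vsel G z i x))"
    by metis
  then have "restrict f {1..n} \<in> Ffuns G n z x y"
    by (auto simp: Ffuns_def Sset_def)
  then show ?thesis
    by blast
qed

lemma finite_Ffuns: "finite (Ffuns G n z x y)"
  by (rule finite_subset[OF _ finite_PiE[OF finite_atLeastAtMost finite_orbit]])
    (auto simp: Ffuns_def)

end

section \<open>Comparison of the two constants\<close>

lemma exists_large_fibre:
  assumes "finite S" "S \<noteq> {}" "finite A" "f ` A \<subseteq> S"
  shows "\<exists>w\<in>S. real (card A) / real (card S) \<le> real (card {i\<in>A. f i = w})"
proof (rule ccontr)
  assume "\<not> ?thesis"
  then have "(\<Sum>w\<in>S. real (card {i\<in>A. f i = w})) < (\<Sum>w\<in>S. real (card A) / real (card S))"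
    using assms by (intro sum_strict_mono) auto
  also have "\<dots> = real (card A)"
    using assms by simp
  also have "real (card A) = (\<Sum>w\<in>S. real (card {i\<in>A. f i = w}))"
    using sum.group[OF assms(3,1,4), of "\<lambda>_. 1 :: real"] by simp
  finally show False
    by simp
qed

context finite_orthogonal_group
begin

lemma card_Sset_le_voronoi_char:
  assumes "x \<in> principal G" "y \<in> principal G"
  shows "card (Sset G x y) \<le> voronoi_char G"
proof -
  have "card (Sset G x' y') \<le> card G" for x' y'
    using card_mono[OF finite_orbit, of "Sset G x' y'" y'] card_orbit_le[of y']
    by (auto simp: Sset_def)
  then have "finite {card (Sset G x y) | x y. x \<in> principal G \<and> y \<in> principal G}"
    by (auto intro: finite_subset[of _ "{..card G}"])
  then show ?thesis
    unfolding voronoi_char_def using assms by (intro Max_ge) blast+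
qed

lemma alpha_tilde_le:
  assumes "I \<subseteq> {1..n}" "real n / real (voronoi_char G) \<le> real (card I)" "g \<in> I \<rightarrow>\<^sub>E G"
  shows "alpha_tilde G n z \<le> sqrt (lambda_min (\<Sum>i\<in>I. outer (g i *v z i)))"
proof -
  let ?value = "\<lambda>(I, g). sqrt (lambda_min (\<Sum>i\<in>I. outer (g i *v z i)))"
  have "{sqrt (lambda_min (\<Sum>i\<in>I. outer (g i *v z i))) | I g.
      I \<subseteq> {1..n} \<and> real (card I) \<ge> real n / real (voronoi_char G) \<and> g \<in> I \<rightarrow>\<^sub>E G}
    \<subseteq> ?value ` (SIGMA I:Pow {1..n}. I \<rightarrow>\<^sub>E G)"
    by force
  moreover have "finite (SIGMA I:Pow {1..n}. I \<rightarrow>\<^sub>E G)"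
    using finite_group by (intro finite_SigmaI finite_PiE) (auto intro: finite_subset)
  ultimately show ?thesis
    unfolding alpha_tilde_def using assms by (intro Min_le) (auto intro: finite_surj)
qed

lemma alpha_tilde_le_vsel:
  assumes "x \<in> goodset G n z" "J \<subseteq> {1..n}" "real n / real (voronoi_char G) \<le> real (card J)"
  shows "alpha_tilde G n z \<le> sqrt (lambda_min (\<Sum>i\<in>J. outer (vsel G z i x)))"
proof -
  have "\<exists>g\<in>G. vsel G z i x = g *v z i" if "i \<in> J" for i
  proof -
    have "x \<in> qcell G (z i)"
      using assms that by (auto simp: goodset_def)
    then show ?thesis
      using vsel_qcell(1)[of x z i] by (auto simp: orbit_def)
  qed
  then obtain g where g: "\<forall>i\<in>J. g i \<in> G \<and> vsel G z i x = g i *v z i"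
    by metis
  then have "(\<Sum>i\<in>J. outer (vsel G z i x)) = (\<Sum>i\<in>J. outer (restrict g J i *v z i))"
    by simp
  moreover have "alpha_tilde G n z \<le> sqrt (lambda_min (\<Sum>i\<in>J. outer (restrict g J i *v z i)))"
    using assms(2,3) g by (intro alpha_tilde_le) auto
  ultimately show ?thesis
    by simp
qed

lemma alpha_tilde_le_Ffuns_value:
  assumes x: "x \<in> goodset G n z" and y: "y \<in> goodset G n z" and f: "f \<in> Ffuns G n z x y"
  shows "alpha_tilde G n z \<le> sqrt (\<Sum>w\<in>Sset G x y.
           lambda_min (\<Sum>i\<in>{i\<in>{1..n}. f i = w}. outer (vsel G z i x)))"
proof -
  let ?S = "Sset G x y"
  let ?fibre = "\<lambda>w. {i\<in>{1..n}. f i = w}"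
  have nonneg: "0 \<le> (\<Sum>w\<in>?S. lambda_min (\<Sum>i\<in>?fibre w. outer (vsel G z i x)))"
    by (intro sum_nonneg lambda_min_sum_outer_nonneg)
  show ?thesis
  proof (cases "n = 0")
    case True
    then have "alpha_tilde G n z \<le> sqrt (lambda_min (\<Sum>i\<in>{}. outer (vsel G z i x)))"
      using x by (intro alpha_tilde_le_vsel) auto
    with nonneg show ?thesis
      by (simp add: lambda_min_zero)
        (meson order_trans real_sqrt_ge_zero)
  next
    case False
    have "finite ?S"
      using finite_orbit by (rule finite_subset[rotated]) (auto simp: Sset_def)
    have "f ` {1..n} \<subseteq> ?S"
      using f by (auto simp: Ffuns_def)
    with False have "?S \<noteq> {}"
      by auto
    have "card ?S \<le> voronoi_char G"
      using card_Sset_le_voronoi_char x y by (auto simp: goodset_def)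
    moreover have "0 < card ?S"
      using \<open>finite ?S\<close> \<open>?S \<noteq> {}\<close> by (simp add: card_gt_0_iff)
    ultimately have chi: "real n / real (voronoi_char G) \<le> real n / real (card ?S)"
      by (intro divide_left_mono mult_pos_pos) auto
    obtain w where w: "w \<in> ?S" and "real n / real (card ?S) \<le> real (card (?fibre w))"
      using exists_large_fibre[OF \<open>finite ?S\<close> \<open>?S \<noteq> {}\<close> _ \<open>f ` {1..n} \<subseteq> ?S\<close>] by auto
    with chi x have "alpha_tilde G n z \<le> sqrt (lambda_min (\<Sum>i\<in>?fibre w. outer (vsel G z i x)))"
      by (intro alpha_tilde_le_vsel) auto
    also have "\<dots> \<le> sqrt (\<Sum>w\<in>?S. lambda_min (\<Sum>i\<in>?fibre w. outer (vsel G z i x)))"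
      using \<open>finite ?S\<close> w by (intro real_sqrt_le_mono member_le_sum lambda_min_sum_outer_nonneg)
    finally show ?thesis .
  qed
qed

end

theorem corollary30:
  fixes G :: "(real^'d^'d) set" and n :: nat and z :: "nat \<Rightarrow> real^'d"
  assumes "finite G"
    and "\<forall>g\<in>G. orthogonal_matrix g"
    and "mat 1 \<in> G"
    and "\<forall>g\<in>G. \<forall>h\<in>G. g ** h \<in> G"
    and "\<forall>g\<in>G. transpose g \<in> G"
  shows "alpha_tilde G n z \<le> alpha G n z"
proof -
  interpret finite_orthogonal_group G
    using assms by unfold_locales
  show ?thesis
    unfolding alpha_def
  proof (rule cINF_greatest)
    show "goodset G n z \<times> goodset G n z \<noteq> {}"
      using goodset_nonempty by simp
  next
    fix xy assume "xy \<in> goodset G n z \<times> goodset G n z"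
    then obtain x y where xy: "xy = (x, y)" "x \<in> goodset G n z" "y \<in> goodset G n z"
      by auto
    then obtain f where f: "f \<in> Ffuns G n z x y"
      using Ffuns_nonempty by blast
    show "alpha_tilde G n z \<le> Max ((\<lambda>f. sqrt (\<Sum>w\<in>Sset G (fst xy) (snd xy).
        lambda_min (\<Sum>i\<in>{i\<in>{1..n}. f i = w}. outer (vsel G z i (fst xy)))))
        ` Ffuns G n z (fst xy) (snd xy))"
      using alpha_tilde_le_Ffuns_value[OF xy(2,3) f] finite_Ffuns f xy(1)
      by (auto intro: order_trans[OF _ Max_ge])
  qed
qed

end
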